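(* Let $c_0>0$, $c>0$, $q\in\mathbb Z^+$, and let $\boldsymbol\beta=(\beta_j)_{j\ge1}$ and $(\Upsilon_{\boldsymbol\nu})_{\boldsymbol\nu\in\mathscr F}$ be sequences of non-negative reals such that $\Upsilon_{\boldsymbol 0}\le c_0$ and, for all $\boldsymbol\nu\in\mathscr F\setminus\{\boldsymbol 0\}$, $$\Upsilon_{\boldsymbol\nu}\le\sum_{\substack{\boldsymbol 0\ne\boldsymbol m\le\boldsymbol\nu\\|{\rm supp}(\boldsymbol m)|\le q}}c^{|\boldsymbol m|}\binom{\boldsymbol\nu}{\boldsymbol m}\Upsilon_{\boldsymbol\nu-\boldsymbol m}\prod_{j\in{\rm supp}(\boldsymbol m)}\beta_j.$$ Then for all $\boldsymbol\nu\in\mathscr F$, $$\Upsilon_{\boldsymbol\nu}\le c_0c^{|\boldsymbol\nu|}\sum_{\boldsymbol m\le\boldsymbol\nu}\boldsymbol m!\,D_q(\boldsymbol m)\,\boldsymbol\beta^{\boldsymbol m}\prod_{i\ge1}S(\nu_i,m_i),$$ where $D_q(\boldsymbol 0):=1$ and $D_q(\boldsymbol m):=\sum_{\mathfrak u\subseteq{\rm supp}(\boldsymbol m),\,0\ne|\mathfrak u|\le q}D_q(\boldsymbol m-\boldsymbol e_{\mathfrak u})$ for $\boldsymbol m\ne\boldsymbol 0$, with $\boldsymbol e_{\mathfrak u}:=\sum_{j\in\mathfrak u}\boldsymbol e_j$. If all the hypothesized inequalities are equalities, so is the conclusion. The result also holds with $q=\infty$ (no bounds on $|{\rm supp}(\boldsymbol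 m)|$ and $|\mathfrak u|$).
   Context: $\mathscr F$ is the set of finitely supported multi-indices in $\mathbb N_0^{\mathbb N}$; ${\rm supp}(\boldsymbol\nu)=\{j:\nu_j\ne0\}$, $|\boldsymbol\nu|=\sum\nu_j$, $\boldsymbol\nu!=\prod\nu_j!$, $\boldsymbol\beta^{\boldsymbol\nu}=\prod\beta_j^{\nu_j}$, $\boldsymbol m\le\boldsymbol\nu$ componentwise, $\binom{\boldsymbol\nu}{\boldsymbol m}=\prod_j\binom{\nu_j}{m_j}$, $\boldsymbol e_j$ the $j$th unit multi-index. $S(n,m)=\frac1{m!}\sum_{j=0}^m(-1)^{m-j}\binom mj j^n$ for $n\ge m\ge0$ (Stirling numbers of the second kind, $S(0,0)=1$). *)

theory Defs
  imports Complex_Main "HOL-Library.Extended_Nat" "HOL-Combinatorics.Stirling"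
begin

text \<open>Multi-indices: functions nat => nat; the coordinate j of the paper
(j >= 1) is coordinate j-1 here. Finitely supported ones form the set F.\<close>

type_synonym mi = "nat \<Rightarrow> nat"

definition supp :: "mi \<Rightarrow> nat set" where
  "supp \<nu> = {j. \<nu> j \<noteq> 0}"

definition finsupp :: "mi \<Rightarrow> bool" where
  "finsupp \<nu> \<longleftrightarrow> finite (supp \<nu>)"

definition msize :: "mi \<Rightarrow> nat" where
  "msize \<nu> = (\<Sum>j\<in>supp \<nu>. \<nu> j)"

definition mle :: "mi \<Rightarrow> mi \<Rightarrow> bool" where
  "mle m \<nu> \<longleftrightarrow> (\<forall>j. m j \<le> \<nu> j)"

definition mfact :: "mi \<Rightarrow> real" where
  "mfact m = (\<Prod>j\<in>supp m. fact (m j))"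

definition mpow :: "(nat \<Rightarrow> real) \<Rightarrow> mi \<Rightarrow> real" where
  "mpow \<beta> m = (\<Prod>j\<in>supp m. \<beta> j ^ m j)"

definition mbinom :: "mi \<Rightarrow> mi \<Rightarrow> real" where
  "mbinom \<nu> m = (\<Prod>j\<in>supp \<nu>. real (\<nu> j choose m j))"

definition msub :: "mi \<Rightarrow> mi \<Rightarrow> mi" where
  "msub \<nu> m = (\<lambda>j. \<nu> j - m j)"

definition eset :: "nat set \<Rightarrow> mi" where
  "eset u = (\<lambda>j. if j \<in> u then 1 else 0)"

text \<open>D_q(m) (q :: enat, q = \<infinity> meaning no bound), defined by the paper's
recursion. The recursion is run with a fuel argument that is an upper bound
for |m|; since |m - e_u| < |m| for nonempty u \<subseteq> supp m, the fuel
|m| suffices and the result is exactly the paper's recursion.\<close>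

fun Dfuel :: "enat \<Rightarrow> nat \<Rightarrow> mi \<Rightarrow> real" where
  "Dfuel q 0 m = 1"
| "Dfuel q (Suc n) m =
     (if m = (\<lambda>_. 0) then 1
      else (\<Sum>u\<in>{u. u \<subseteq> supp m \<and> u \<noteq> {} \<and> enat (card u) \<le> q}.
              Dfuel q n (msub m (eset u))))"

definition Dq :: "enat \<Rightarrow> mi \<Rightarrow> real" where
  "Dq q m = Dfuel q (msize m) m"

definition boundRHS :: "real \<Rightarrow> real \<Rightarrow> enat \<Rightarrow> (nat \<Rightarrow> real) \<Rightarrow> mi \<Rightarrow> real" where
  "boundRHS c0 c q \<beta> \<nu> = c0 * c ^ msize \<nu> *
     (\<Sum>m\<in>{m. mle m \<nu>}. mfact m * Dq q m * mpow \<beta> m *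
        (\<Prod>i\<in>supp \<nu>. real (Stirling (\<nu> i) (m i))))"

definition recRHS :: "real \<Rightarrow> enat \<Rightarrow> (nat \<Rightarrow> real) \<Rightarrow> (mi \<Rightarrow> real) \<Rightarrow> mi \<Rightarrow> real" where
  "recRHS c q \<beta> \<Upsilon> \<nu> =
     (\<Sum>m\<in>{m. mle m \<nu> \<and> m \<noteq> (\<lambda>_. 0) \<and> enat (card (supp m)) \<le> q}.
        c ^ msize m * mbinom \<nu> m * \<Upsilon> (msub \<nu> m) * (\<Prod>j\<in>supp m. \<beta> j))"

end

theory Submission
  imports Defs "HOL-Library.FuncSet"
begin

text \<open>Write B(\<nu>) for the sum in the bound, so that the bound reads c0 c^|\<nu>| B(\<nu>).
  The point is that B satisfies the hypothesised recursion with equality: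
  B(\<nu>) = \<Sum> C(\<nu>, m) B(\<nu> - m) \<Prod>_{j \<in> supp m} \<beta>_j for \<nu> \<noteq> 0.
  To see this, expand D_q(m) in B(\<nu>) by its recursion and substitute m = m' + e_u;
  the coordinatewise identity (j + 1)! S(n, j + 1) = j! \<Sum>_{k \<ge> 1} C(n, k) S(n - k, j)
  (a form of S(n + 1, j + 1) = \<Sum>_k C(n, k) S(k, j)) then matches the result with the
  right-hand side grouped by u = supp m. As the recursion has non-negative
  coefficients and strictly decreases |\<nu>|, induction on |\<nu>| compares \<Upsilon> with
  c0 c^|\<nu>| B(\<nu>), both for the inequality and for the equality case.\<close>

lemma supp_mono: "mle m \<nu> \<Longrightarrow> supp m \<subseteq> supp \<nu>"
  by (auto simp: mle_def supp_def) (meson less_le_trans)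

lemma finsupp_mle: "finsupp \<nu> \<Longrightarrow> mle m \<nu> \<Longrightarrow> finsupp m"
  using supp_mono finite_subset unfolding finsupp_def by blast

lemma supp_msub_subset: "supp (msub \<nu> m) \<subseteq> supp \<nu>"
  by (auto simp: msub_def supp_def)

lemma finsupp_msub: "finsupp \<nu> \<Longrightarrow> finsupp (msub \<nu> m)"
  using supp_msub_subset finite_subset unfolding finsupp_def by blast

lemma mle_msub: "mle (msub \<nu> m) \<nu>"
  by (simp add: mle_def msub_def)

lemma msize_zero [simp]: "msize (\<lambda>_. 0) = 0"
  by (simp add: msize_def supp_def)

lemma msize_eq_sum: "finite I \<Longrightarrow> supp m \<subseteq> I \<Longrightarrow> msize m = (\<Sum>j\<in>I. m j)"
  unfolding msize_def by (rule sum.mono_neutral_left) (auto simp: supp_def)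

lemma prod_supp_eq_prod:
  "finite I \<Longrightarrow> supp m \<subseteq> I \<Longrightarrow> (\<And>j. j \<in> I \<Longrightarrow> m j = 0 \<Longrightarrow> g j = 1)
   \<Longrightarrow> (\<Prod>j\<in>supp m. g j) = (\<Prod>j\<in>I. g j)"
  by (rule prod.mono_neutral_left) (auto simp: supp_def)

lemma msize_msub:
  assumes "finsupp \<nu>" and "mle m \<nu>"
  shows "msize \<nu> = msize m + msize (msub \<nu> m)"
proof -
  have "finite (supp \<nu>)" using assms(1) by (simp add: finsupp_def)
  moreover have "msize \<nu> = (\<Sum>j\<in>supp \<nu>. m j + msub \<nu> m j)"
    using assms(2) by (auto simp: msize_def msub_def mle_def intro!: sum.cong)
  ultimately show ?thesis
    using supp_mono[OF assms(2)] supp_msub_subset[of \<nu> m] by (simp add: sum.distrib msize_eq_sum)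
qed

lemma msize_pos:
  assumes "finsupp m" and "m \<noteq> (\<lambda>_. 0)"
  shows "0 < msize m"
proof -
  obtain j where j: "m j \<noteq> 0" using assms(2) by auto
  have "m j \<le> msize m"
    unfolding msize_def using assms(1) j by (intro member_le_sum) (auto simp: finsupp_def supp_def)
  then show ?thesis using j by simp
qed

lemma msize_msub_less:
  "finsupp \<nu> \<Longrightarrow> mle m \<nu> \<Longrightarrow> m \<noteq> (\<lambda>_. 0) \<Longrightarrow> msize (msub \<nu> m) < msize \<nu>"
  using msize_msub msize_pos finsupp_mle by fastforce

lemma finsupp_msub_induct [consumes 1, case_names step]:
  assumes "finsupp \<nu>"
    and "\<And>\<nu>. finsupp \<nu> \<Longrightarrow> (\<And>m. mle m \<nu> \<Longrightarrow> m \<noteq> (\<lambda>_. 0) \<Longrightarrow> P (msub \<nu> m)) \<Longrightarrow> P \<nu>"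
  shows "P \<nu>"
  using assms(1)
proof (induction "msize \<nu>" arbitrary: \<nu> rule: less_induct)
  case less
  show ?case
  proof (rule assms(2)[OF less.prems])
    fix m assume "mle m \<nu>" and "m \<noteq> (\<lambda>_. 0)"
    then show "P (msub \<nu> m)"
      using less by (blast intro: finsupp_msub msize_msub_less)
  qed
qed

definition mbox :: "nat set \<Rightarrow> (nat \<Rightarrow> nat set) \<Rightarrow> mi set" where
  "mbox I A = {m. (\<forall>i\<in>I. m i \<in> A i) \<and> (\<forall>i. i \<notin> I \<longrightarrow> m i = 0)}"

lemma bij_betw_restrict_mbox:
  "bij_betw (\<lambda>m. restrict m I) (mbox I A) (PiE I A)"
  by (rule bij_betw_byWitness[where f' = "\<lambda>g i. if i \<in> I then g i else 0"])
     (auto simp: mbox_def fun_eq_iff PiE_def extensional_def)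

lemma finite_mbox: "finite I \<Longrightarrow> (\<And>i. i \<in> I \<Longrightarrow> finite (A i)) \<Longrightarrow> finite (mbox I A)"
  using bij_betw_finite[OF bij_betw_restrict_mbox] by (simp add: finite_PiE)

lemma prod_sum_mbox:
  fixes f :: "nat \<Rightarrow> nat \<Rightarrow> 'c :: comm_semiring_1"
  assumes "finite I" and "\<And>i. i \<in> I \<Longrightarrow> finite (A i)"
  shows "(\<Prod>i\<in>I. \<Sum>k\<in>A i. f i k) = (\<Sum>m\<in>mbox I A. \<Prod>i\<in>I. f i (m i))"
proof -
  have "(\<Sum>g\<in>PiE I A. \<Prod>i\<in>I. f i (g i)) = (\<Sum>m\<in>mbox I A. \<Prod>i\<in>I. f i (restrict m I i))"
    by (rule sum.reindex_bij_betw[OF bij_betw_restrict_mbox, symmetric])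
  then show ?thesis
    by (simp add: prod_sum_PiE[OF assms])
qed

lemma mle_eq_mbox: "{m. mle m \<nu>} = mbox (supp \<nu>) (\<lambda>i. {0..\<nu> i})"
proof -
  have "m j \<le> \<nu> j \<longleftrightarrow> (\<nu> j \<noteq> 0 \<longrightarrow> m j \<le> \<nu> j) \<and> (\<nu> j = 0 \<longrightarrow> m j = 0)" for m j
    by auto
  then show ?thesis by (auto simp: mbox_def mle_def supp_def)
qed

lemma finite_mle: "finsupp \<nu> \<Longrightarrow> finite {m. mle m \<nu>}"
  unfolding mle_eq_mbox finsupp_def by (intro finite_mbox) auto

lemma mle_supp_eq_mbox:
  assumes "u \<subseteq> supp \<nu>"
  shows "{m. mle m \<nu> \<and> supp m = u} = mbox (supp \<nu>) (\<lambda>i. if i \<in> u then {1..\<nu> i} else {0})"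
proof (intro set_eqI iffI)
  fix m assume "m \<in> {m. mle m \<nu> \<and> supp m = u}"
  then have "mle m \<nu>" and "supp m = u" by auto
  with assms show "m \<in> mbox (supp \<nu>) (\<lambda>i. if i \<in> u then {1..\<nu> i} else {0})"
    unfolding mbox_def mle_def supp_def by auto
next
  fix m assume m: "m \<in> mbox (supp \<nu>) (\<lambda>i. if i \<in> u then {1..\<nu> i} else {0})"
  have "m i = 0" if "i \<notin> u" for i
    using m that by (cases "i \<in> supp \<nu>") (auto simp: mbox_def)
  moreover have "1 \<le> m i \<and> m i \<le> \<nu> i" if "i \<in> u" for i
    using m that subsetD[OF assms that] unfolding mbox_def by force
  ultimately have "m i \<le> \<nu> i" and "m i \<noteq> 0 \<longleftrightarrow> i \<in> u" for i
    by (cases "i \<in> u"; force)+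
  then have "mle m \<nu>" and "supp m = u"
    unfolding mle_def supp_def by auto
  then show "m \<in> {m. mle m \<nu> \<and> supp m = u}" by simp
qed

section \<open>Stirling numbers\<close>

lemma Stirling_Suc_Suc_eq_sum:
  "Stirling (Suc n) (Suc j) = (\<Sum>k\<le>n. (n choose k) * Stirling k j)"
proof (induction n arbitrary: j)
  case 0
  then show ?case by (cases j) auto
next
  case (Suc n)
  have "(\<Sum>k\<le>Suc n. (Suc n choose k) * Stirling k j) =
      Stirling 0 j + (\<Sum>k\<le>n. (Suc n choose Suc k) * Stirling (Suc k) j)"
    by (simp only: sum.atMost_Suc_shift) simp
  also have "\<dots> = (Stirling 0 j + (\<Sum>k\<le>n. (n choose Suc k) * Stirling (Suc k) j))
      + (\<Sum>k\<le>n. (n choose k) * Stirling (Suc k) j)"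
    by (simp add: sum.distrib distrib_right)
  also have "Stirling 0 j + (\<Sum>k\<le>n. (n choose Suc k) * Stirling (Suc k) j) =
      (\<Sum>k\<le>Suc n. (n choose k) * Stirling k j)"
    by (simp only: sum.atMost_Suc_shift) simp
  finally have split: "(\<Sum>k\<le>Suc n. (Suc n choose k) * Stirling k j) =
      (\<Sum>k\<le>n. (n choose k) * Stirling k j) + (\<Sum>k\<le>n. (n choose k) * Stirling (Suc k) j)"
    by simp
  show ?case
  proof (cases j)
    case 0
    then show ?thesis using split Suc.IH[of 0] by simp
  next
    case (Suc i)
    have "(\<Sum>k\<le>n. (n choose k) * Stirling (Suc k) j) =
        j * (\<Sum>k\<le>n. (n choose k) * Stirling k j) + (\<Sum>k\<le>n. (n choose k) * Stirling k i)"
      using Suc by (simp add: sum.distrib sum_distrib_left algebra_simps)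
    then show ?thesis
      using split Suc.IH[of j] Suc.IH[of i] Suc by simp
  qed
qed

lemma Suc_mult_Stirling_eq_sum:
  "Suc j * Stirling n (Suc j) = (\<Sum>k\<in>{1..n}. (n choose k) * Stirling (n - k) j)"
proof -
  have "(\<Sum>k\<in>{1..n}. (n choose k) * Stirling (n - k) j) = (\<Sum>k<n. (n choose k) * Stirling k j)"
    by (intro sum.reindex_bij_witness[of _ "\<lambda>k. n - k" "\<lambda>k. n - k"])
       (auto simp: binomial_symmetric[symmetric])
  moreover have "Suc j * Stirling n (Suc j) + Stirling n j = (\<Sum>k<n. (n choose k) * Stirling k j) + Stirling n j"
    using Stirling_Suc_Suc_eq_sum[of n j] by (simp add: lessThan_Suc_atMost[symmetric])
  ultimately show ?thesis by linarith
qed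

lemma fact_mult_Stirling_Suc:
  "fact (Suc j) * real (Stirling n (Suc j)) =
     fact j * (\<Sum>k\<in>{1..n}. real (n choose k) * real (Stirling (n - k) j))"
proof -
  have "real (Suc j) * real (Stirling n (Suc j)) =
      (\<Sum>k\<in>{1..n}. real (n choose k) * real (Stirling (n - k) j))"
    by (simp only: of_nat_mult[symmetric] Suc_mult_Stirling_eq_sum of_nat_sum)
  then show ?thesis by (simp only: fact_Suc of_nat_mult mult_ac)
qed

lemma Dfuel_zero: "Dfuel q n (\<lambda>_. 0) = 1"
  by (cases n) simp_all

lemma Dq_zero [simp]: "Dq q (\<lambda>_. 0) = 1"
  by (simp add: Dq_def Dfuel_zero)

definition small_subsets :: "enat \<Rightarrow> nat set \<Rightarrow> nat set set" where
  "small_subsets q A = {u. u \<subseteq> A \<and> u \<noteq> {} \<and> enat (card u) \<le> q}"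

lemma finite_small_subsets: "finite A \<Longrightarrow> finite (small_subsets q A)"
  unfolding small_subsets_def by (rule finite_subset[of _ "Pow A"]) auto

lemma mle_eset: "u \<subseteq> supp m \<Longrightarrow> mle (eset u) m"
  by (auto simp: mle_def eset_def supp_def)

lemma eset_nonzero: "u \<noteq> {} \<Longrightarrow> eset u \<noteq> (\<lambda>_. 0)"
  by (auto simp: eset_def fun_eq_iff)

lemma msize_msub_eset_less:
  "finsupp m \<Longrightarrow> u \<in> small_subsets q (supp m) \<Longrightarrow> msize (msub m (eset u)) < msize m"
  by (intro msize_msub_less mle_eset eset_nonzero) (auto simp: small_subsets_def)

lemma Dfuel_eq_Dq: "finsupp m \<Longrightarrow> msize m \<le> n \<Longrightarrow> Dfuel q n m = Dq q m"
proof (induction n arbitrary: m rule: less_induct)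
  case (less n)
  show ?case
  proof (cases "m = (\<lambda>_. 0)")
    case False
    obtain n' where n: "n = Suc n'" using less.prems msize_pos[OF less.prems(1) False] by (cases n) auto
    obtain k where k: "msize m = Suc k" using msize_pos[OF less.prems(1) False] by (cases "msize m") auto
    have IH: "Dfuel q l (msub m (eset u)) = Dq q (msub m (eset u))"
      if "u \<in> small_subsets q (supp m)" and "l \<in> {n', k}" for u l
      using that less.prems n k msize_msub_eset_less[OF less.prems(1) that(1)]
      by (intro less.IH finsupp_msub) auto
    have "Dfuel q n m = (\<Sum>u\<in>small_subsets q (supp m). Dfuel q n' (msub m (eset u)))"
      using n False by (simp add: small_subsets_def)
    also have "\<dots> = (\<Sum>u\<in>small_subsets q (supp m). Dfuel q k (msub m (eset u)))"
      using IH by simp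
    also have "\<dots> = Dq q m"
      using k False by (simp add: Dq_def small_subsets_def)
    finally show ?thesis .
  qed (simp add: Dq_def Dfuel_zero)
qed

lemma Dq_rec:
  assumes "finsupp m" and "m \<noteq> (\<lambda>_. 0)"
  shows "Dq q m = (\<Sum>u\<in>small_subsets q (supp m). Dq q (msub m (eset u)))"
proof -
  obtain k where k: "msize m = Suc k" using msize_pos[OF assms] by (cases "msize m") auto
  have "Dq q m = (\<Sum>u\<in>small_subsets q (supp m). Dfuel q k (msub m (eset u)))"
    using k assms(2) by (simp add: Dq_def small_subsets_def)
  also have "\<dots> = (\<Sum>u\<in>small_subsets q (supp m). Dq q (msub m (eset u)))"
    using assms(1) k msize_msub_eset_less[OF assms(1)]
    by (intro sum.cong refl Dfuel_eq_Dq finsupp_msub) fastforce+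
  finally show ?thesis .
qed

definition madd :: "mi \<Rightarrow> mi \<Rightarrow> mi" where
  "madd m w = (\<lambda>j. m j + w j)"

lemma madd_msub_eset: "u \<subseteq> supp m \<Longrightarrow> madd (msub m (eset u)) (eset u) = m"
  by (auto simp: madd_def msub_def eset_def supp_def fun_eq_iff)

lemma msub_madd_eset: "msub (madd m (eset u)) (eset u) = m"
  by (auto simp: madd_def msub_def eset_def fun_eq_iff)

lemma madd_eset_eq_zero_iff: "madd m (eset u) = (\<lambda>_. 0) \<longleftrightarrow> m = (\<lambda>_. 0) \<and> u = {}"
  by (auto simp: madd_def eset_def fun_eq_iff)

lemma subset_supp_madd_eset: "u \<subseteq> supp (madd m (eset u))"
  by (auto simp: madd_def eset_def supp_def)

lemma supp_madd_eset_subset: "u \<subseteq> supp \<nu> \<Longrightarrow> mle m \<nu> \<Longrightarrow> supp (madd m (eset u)) \<subseteq> supp \<nu>"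
  using supp_mono[of m \<nu>] by (auto simp: madd_def eset_def supp_def)

lemma mle_madd_imp_mle: "mle (madd m w) \<nu> \<Longrightarrow> mle m \<nu>"
  by (auto simp: mle_def madd_def intro: le_trans[rotated])

lemma sum_Dq_pairs_reindex:
  assumes "finsupp \<nu>"
  shows "(\<Sum>m\<in>{m. mle m \<nu>} - {\<lambda>_. 0}. \<Sum>u\<in>small_subsets q (supp m). g m u) =
    (\<Sum>u\<in>small_subsets q (supp \<nu>). \<Sum>m\<in>{m. mle (madd m (eset u)) \<nu>}. g (madd m (eset u)) u)"
proof -
  let ?M = "{m. mle m \<nu>} - {\<lambda>_. 0}"
  let ?U = "small_subsets q (supp \<nu>)"
  let ?N = "\<lambda>u. {m. mle (madd m (eset u)) \<nu>}"
  have fin: "finite {m. mle m \<nu>}" using assms by (rule finite_mle)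
  have "(\<Sum>m\<in>?M. \<Sum>u\<in>small_subsets q (supp m). g m u) =
      (\<Sum>(m, u)\<in>Sigma ?M (\<lambda>m. small_subsets q (supp m)). g m u)"
    using fin assms finite_subset[OF supp_mono]
    by (intro sum.Sigma) (auto intro!: finite_small_subsets simp: finsupp_def)
  also have "\<dots> = (\<Sum>(u, m)\<in>Sigma ?U ?N. g (madd m (eset u)) u)"
    using supp_mono[of _ \<nu>]
    by (intro sum.reindex_bij_witness[of _ "\<lambda>(u, m). (madd m (eset u), u)" "\<lambda>(m, u). (u, msub m (eset u))"])
       (auto simp: small_subsets_def madd_msub_eset msub_madd_eset madd_eset_eq_zero_iff
         intro: subset_supp_madd_eset[THEN subsetD])
  also have "\<dots> = (\<Sum>u\<in>?U. \<Sum>m\<in>?N u. g (madd m (eset u)) u)"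
    using assms fin
    by (intro sum.Sigma[symmetric] finite_small_subsets ballI finite_subset[OF _ fin])
       (auto simp: finsupp_def intro: mle_madd_imp_mle)
  finally show ?thesis .
qed

section \<open>The bound satisfies the recursion\<close>

definition Stirling_prod :: "nat set \<Rightarrow> mi \<Rightarrow> mi \<Rightarrow> real" where
  "Stirling_prod I w m = (\<Prod>i\<in>I. real (Stirling (w i) (m i)))"

definition bound_sum :: "enat \<Rightarrow> (nat \<Rightarrow> real) \<Rightarrow> mi \<Rightarrow> real" where
  "bound_sum q \<beta> \<nu> =
     (\<Sum>m\<in>{m. mle m \<nu>}. mfact m * Dq q m * mpow \<beta> m * Stirling_prod (supp \<nu>) \<nu> m)"

lemma boundRHS_eq_bound_sum: "boundRHS c0 c q \<beta> \<nu> = c0 * c ^ msize \<nu> * bound_sum q \<beta> \<nu>"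
  by (simp add: boundRHS_def bound_sum_def Stirling_prod_def)

lemma bound_sum_zero [simp]: "bound_sum q \<beta> (\<lambda>_. 0) = 1"
proof -
  have "{m. mle m (\<lambda>_. 0)} = {\<lambda>_. 0}" by (auto simp: mle_def fun_eq_iff)
  moreover have "supp (\<lambda>_. 0) = {}" by (simp add: supp_def)
  ultimately show ?thesis by (simp add: bound_sum_def mfact_def mpow_def Stirling_prod_def)
qed

lemma Stirling_prod_eq_0:
  "finite I \<Longrightarrow> i \<in> I \<Longrightarrow> Stirling (w i) (m i) = 0 \<Longrightarrow> Stirling_prod I w m = 0"
  by (auto simp: Stirling_prod_def prod_zero_iff)

text \<open>The extra factors are S(0, 0) = 1; the extra terms contain a factor
  S(w_i, m_i) = 0 with w_i < m_i.\<close>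
lemma bound_sum_on:
  assumes "finsupp \<nu>" and "mle w \<nu>"
  shows "bound_sum q \<beta> w =
    (\<Sum>m\<in>{m. mle m \<nu>}. mfact m * Dq q m * mpow \<beta> m * Stirling_prod (supp \<nu>) w m)"
proof -
  have fin: "finite (supp \<nu>)" using assms(1) by (simp add: finsupp_def)
  have "Stirling_prod (supp w) w m = Stirling_prod (supp \<nu>) w m" if "mle m w" for m
  proof -
    have "m i = 0" if "w i = 0" for i using \<open>mle m w\<close> that by (metis le_zero_eq mle_def)
    then show ?thesis
      unfolding Stirling_prod_def using fin supp_mono[OF assms(2)] by (intro prod_supp_eq_prod) auto
  qed
  then have "bound_sum q \<beta> w =
      (\<Sum>m\<in>{m. mle m w}. mfact m * Dq q m * mpow \<beta> m * Stirling_prod (supp \<nu>) w m)"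
    by (simp add: bound_sum_def)
  also have "\<dots> = (\<Sum>m\<in>{m. mle m \<nu>}. mfact m * Dq q m * mpow \<beta> m * Stirling_prod (supp \<nu>) w m)"
  proof (rule sum.mono_neutral_left)
    show "finite {m. mle m \<nu>}" using assms(1) by (rule finite_mle)
    show "{m. mle m w} \<subseteq> {m. mle m \<nu>}" using assms(2) by (auto simp: mle_def intro: le_trans)
    show "\<forall>m\<in>{m. mle m \<nu>} - {m. mle m w}. mfact m * Dq q m * mpow \<beta> m * Stirling_prod (supp \<nu>) w m = 0"
    proof
      fix m assume m: "m \<in> {m. mle m \<nu>} - {m. mle m w}"
      then obtain i where "w i < m i" and "m i \<le> \<nu> i" by (auto simp: mle_def not_le)
      then have "Stirling_prod (supp \<nu>) w m = 0"
        using fin by (intro Stirling_prod_eq_0[of _ i]) (auto simp: supp_def)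
      then show "mfact m * Dq q m * mpow \<beta> m * Stirling_prod (supp \<nu>) w m = 0" by simp
    qed
  qed
  finally show ?thesis .
qed

lemma mpow_madd_eset:
  assumes "finsupp \<nu>" and "u \<subseteq> supp \<nu>" and "mle m \<nu>"
  shows "mpow \<beta> (madd m (eset u)) = mpow \<beta> m * (\<Prod>j\<in>u. \<beta> j)"
proof -
  have fin: "finite (supp \<nu>)" using assms(1) by (simp add: finsupp_def)
  have "mpow \<beta> (madd m (eset u)) = (\<Prod>j\<in>supp \<nu>. \<beta> j ^ m j * \<beta> j ^ eset u j)"
    unfolding mpow_def using fin supp_madd_eset_subset[OF assms(2,3)]
    by (subst prod_supp_eq_prod) (auto simp: madd_def power_add)
  also have "\<dots> = (\<Prod>j\<in>supp \<nu>. \<beta> j ^ m j) * (\<Prod>j\<in>supp \<nu>. \<beta> j ^ eset u j)"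
    by (rule prod.distrib)
  also have "(\<Prod>j\<in>supp \<nu>. \<beta> j ^ m j) = mpow \<beta> m"
    unfolding mpow_def using fin supp_mono[OF assms(3)] by (intro prod_supp_eq_prod[symmetric]) auto
  also have "(\<Prod>j\<in>supp \<nu>. \<beta> j ^ eset u j) = (\<Prod>j\<in>u. \<beta> j)"
    using fin assms(2) by (intro prod.mono_neutral_cong_right) (auto simp: eset_def)
  finally show ?thesis .
qed

text \<open>The multivariate form of (j + 1)! S(n, j + 1) = j! \<Sum>_{k\<ge>1} C(n, k) S(n - k, j),
  applied in the coordinates of u; the sum over k becomes a sum over the m \<le> \<nu>
  with support u.\<close>
lemma mfact_madd_eset_Stirling_prod:
  assumes "finsupp \<nu>" and "u \<subseteq> supp \<nu>" and "mle m' \<nu>"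
  shows "mfact (madd m' (eset u)) * Stirling_prod (supp \<nu>) \<nu> (madd m' (eset u)) =
    mfact m' * (\<Sum>m\<in>{m. mle m \<nu> \<and> supp m = u}. mbinom \<nu> m * Stirling_prod (supp \<nu>) (msub \<nu> m) m')"
proof -
  let ?I = "supp \<nu>"
  let ?A = "\<lambda>i. if i \<in> u then {1..\<nu> i} else {0::nat}"
  let ?h = "\<lambda>i k. real (\<nu> i choose k) * real (Stirling (\<nu> i - k) (m' i))"
  have fin: "finite ?I" using assms(1) by (simp add: finsupp_def)
  have "mfact (madd m' (eset u)) * Stirling_prod ?I \<nu> (madd m' (eset u)) =
      (\<Prod>i\<in>?I. fact (m' i + eset u i) * real (Stirling (\<nu> i) (m' i + eset u i)))"
    unfolding mfact_def Stirling_prod_def using fin supp_madd_eset_subset[OF assms(2,3)]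
    by (subst prod_supp_eq_prod) (auto simp: madd_def prod.distrib)
  also have "\<dots> = (\<Prod>i\<in>?I. fact (m' i) * (\<Sum>k\<in>?A i. ?h i k))"
  proof (intro prod.cong refl)
    fix i
    show "fact (m' i + eset u i) * real (Stirling (\<nu> i) (m' i + eset u i)) =
        fact (m' i) * (\<Sum>k\<in>?A i. ?h i k)"
      using fact_mult_Stirling_Suc[of "m' i" "\<nu> i"] by (simp add: eset_def)
  qed
  also have "\<dots> = mfact m' * (\<Sum>m\<in>mbox ?I ?A. \<Prod>i\<in>?I. ?h i (m i))"
    unfolding mfact_def using fin supp_mono[OF assms(3)]
    by (simp add: prod.distrib prod_sum_mbox prod_supp_eq_prod)
  also have "\<dots> = mfact m' * (\<Sum>m\<in>{m. mle m \<nu> \<and> supp m = u}. mbinom \<nu> m * Stirling_prod ?I (msub \<nu> m) m')"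
    unfolding mle_supp_eq_mbox[OF assms(2)]
    by (simp add: mbinom_def Stirling_prod_def msub_def prod.distrib)
  finally show ?thesis .
qed

lemma bound_sum_expand:
  assumes "finsupp \<nu>" and "\<nu> \<noteq> (\<lambda>_. 0)"
  shows "bound_sum q \<beta> \<nu> =
    (\<Sum>u\<in>small_subsets q (supp \<nu>). \<Sum>m'\<in>{m. mle m \<nu>}.
       mfact m' * Dq q m' * mpow \<beta> m' * (\<Prod>j\<in>u. \<beta> j) *
       (\<Sum>m\<in>{m. mle m \<nu> \<and> supp m = u}. mbinom \<nu> m * Stirling_prod (supp \<nu>) (msub \<nu> m) m'))"
    (is "_ = ?rhs")
proof -
  let ?M = "{m. mle m \<nu>}"
  let ?SP = "Stirling_prod (supp \<nu>) \<nu>"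
  let ?F = "\<lambda>u m'. mfact (madd m' (eset u)) * mpow \<beta> (madd m' (eset u)) *
                   ?SP (madd m' (eset u)) * Dq q m'"
  have fin: "finite (supp \<nu>)" and finM: "finite ?M"
    using assms(1) by (simp_all add: finsupp_def finite_mle)
  obtain i where i: "\<nu> i \<noteq> 0" using assms(2) by auto
  then have "?SP (\<lambda>_. 0) = 0"
    using fin by (intro Stirling_prod_eq_0[of _ i]) (auto simp: supp_def gr0_conv_Suc)
  then have "bound_sum q \<beta> \<nu> = (\<Sum>m\<in>?M - {\<lambda>_. 0}. mfact m * Dq q m * mpow \<beta> m * ?SP m)"
    unfolding bound_sum_def using finM by (subst sum.remove[of _ "\<lambda>_. 0"]) (auto simp: mle_def)
  also have "\<dots> = (\<Sum>m\<in>?M - {\<lambda>_. 0}. \<Sum>u\<in>small_subsets q (supp m).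
                      mfact m * mpow \<beta> m * ?SP m * Dq q (msub m (eset u)))"
    using assms(1) finsupp_mle by (intro sum.cong refl) (simp add: Dq_rec sum_distrib_left mult_ac)
  also have "\<dots> = (\<Sum>u\<in>small_subsets q (supp \<nu>). \<Sum>m'\<in>{m. mle (madd m (eset u)) \<nu>}. ?F u m')"
    using assms(1) by (simp add: sum_Dq_pairs_reindex msub_madd_eset)
  also have "\<dots> = (\<Sum>u\<in>small_subsets q (supp \<nu>). \<Sum>m'\<in>?M. ?F u m')"
  proof -
    have "?F u m' = 0"
      if u: "u \<in> small_subsets q (supp \<nu>)" and m': "mle m' \<nu>"
        and out: "\<not> mle (madd m' (eset u)) \<nu>" for u m'
    proof -
      obtain i where "\<nu> i < madd m' (eset u) i"
        using out by (auto simp: mle_def not_le)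
      moreover have "m' i \<le> \<nu> i" and "u \<subseteq> supp \<nu>"
        using u m' by (auto simp: mle_def small_subsets_def)
      ultimately have "?SP (madd m' (eset u)) = 0"
        using fin by (intro Stirling_prod_eq_0[of _ i]) (auto simp: madd_def eset_def split: if_splits)
      then show ?thesis by simp
    qed
    then show ?thesis
      by (intro sum.cong refl sum.mono_neutral_left[OF finM]) (auto intro: mle_madd_imp_mle)
  qed
  also have "\<dots> = ?rhs"
  proof (intro sum.cong refl)
    fix u m' assume "u \<in> small_subsets q (supp \<nu>)" and "m' \<in> ?M"
    then have "u \<subseteq> supp \<nu>" and "mle m' \<nu>" by (auto simp: small_subsets_def)
    then show "?F u m' = mfact m' * Dq q m' * mpow \<beta> m' * (\<Prod>j\<in>u. \<beta> j) *
       (\<Sum>m\<in>{m. mle m \<nu> \<and> supp m = u}. mbinom \<nu> m * Stirling_prod (supp \<nu>) (msub \<nu> m) m')"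
      using mfact_madd_eset_Stirling_prod[OF assms(1)] mpow_madd_eset[OF assms(1)]
      by (simp add: mult_ac)
  qed
  finally show ?thesis .
qed

lemma bound_sum_rec:
  assumes "finsupp \<nu>" and "\<nu> \<noteq> (\<lambda>_. 0)"
  shows "bound_sum q \<beta> \<nu> =
    (\<Sum>m\<in>{m. mle m \<nu> \<and> m \<noteq> (\<lambda>_. 0) \<and> enat (card (supp m)) \<le> q}.
       mbinom \<nu> m * bound_sum q \<beta> (msub \<nu> m) * (\<Prod>j\<in>supp m. \<beta> j))"
proof -
  let ?M = "{m. mle m \<nu>}"
  let ?U = "small_subsets q (supp \<nu>)"
  let ?N = "\<lambda>u. {m. mle m \<nu> \<and> supp m = u}"
  let ?W = "\<lambda>m'. mfact m' * Dq q m' * mpow \<beta> m'"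
  have fin: "finite ?M" and finU: "finite ?U"
    using assms(1) by (simp_all add: finite_mle finite_small_subsets finsupp_def)
  have by_supp: "{m. mle m \<nu> \<and> m \<noteq> (\<lambda>_. 0) \<and> enat (card (supp m)) \<le> q} = (\<Union>u\<in>?U. ?N u)"
    using supp_mono[of _ \<nu>] by (auto simp: small_subsets_def supp_def fun_eq_iff)
  have "(\<Sum>m\<in>{m. mle m \<nu> \<and> m \<noteq> (\<lambda>_. 0) \<and> enat (card (supp m)) \<le> q}.
       mbinom \<nu> m * bound_sum q \<beta> (msub \<nu> m) * (\<Prod>j\<in>supp m. \<beta> j)) =
      (\<Sum>u\<in>?U. \<Sum>m\<in>?N u. mbinom \<nu> m * bound_sum q \<beta> (msub \<nu> m) * (\<Prod>j\<in>supp m. \<beta> j))"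
    unfolding by_supp using finU by (rule sum.UNION_disjoint) (auto intro: finite_subset[OF _ fin])
  also have "\<dots> = (\<Sum>u\<in>?U. \<Sum>m\<in>?N u. mbinom \<nu> m * bound_sum q \<beta> (msub \<nu> m) * (\<Prod>j\<in>u. \<beta> j))"
    by (intro sum.cong refl) auto
  also have "\<dots> = (\<Sum>u\<in>?U. \<Sum>m\<in>?N u. \<Sum>m'\<in>?M.
      ?W m' * (\<Prod>j\<in>u. \<beta> j) * (mbinom \<nu> m * Stirling_prod (supp \<nu>) (msub \<nu> m) m'))"
    using assms(1) mle_msub
    by (simp add: bound_sum_on sum_distrib_left sum_distrib_right mult_ac)
  also have "\<dots> = (\<Sum>u\<in>?U. \<Sum>m'\<in>?M. ?W m' * (\<Prod>j\<in>u. \<beta> j) *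
      (\<Sum>m\<in>?N u. mbinom \<nu> m * Stirling_prod (supp \<nu>) (msub \<nu> m) m'))"
    by (simp add: sum.swap[of _ "?N _"] sum_distrib_left)
  also have "\<dots> = bound_sum q \<beta> \<nu>"
    using bound_sum_expand[OF assms] by simp
  finally show ?thesis ..
qed

lemma boundRHS_rec:
  assumes "finsupp \<nu>" and "\<nu> \<noteq> (\<lambda>_. 0)"
  shows "recRHS c q \<beta> (boundRHS c0 c q \<beta>) \<nu> = boundRHS c0 c q \<beta> \<nu>"
proof -
  have "c ^ msize m * mbinom \<nu> m * boundRHS c0 c q \<beta> (msub \<nu> m) * (\<Prod>j\<in>supp m. \<beta> j) =
      c0 * c ^ msize \<nu> * (mbinom \<nu> m * bound_sum q \<beta> (msub \<nu> m) * (\<Prod>j\<in>supp m. \<beta> j))"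
    if "mle m \<nu>" for m
    using msize_msub[OF assms(1) that] by (simp add: boundRHS_eq_bound_sum power_add mult_ac)
  then show ?thesis
    unfolding recRHS_def boundRHS_eq_bound_sum bound_sum_rec[OF assms, of q \<beta>] sum_distrib_left
    by (intro sum.cong) auto
qed

section \<open>Comparison by induction on |\<nu>|\<close>

lemma recRHS_mono:
  assumes "0 \<le> c" and "\<And>j. 0 \<le> \<beta> j"
    and "\<And>m. mle m \<nu> \<Longrightarrow> m \<noteq> (\<lambda>_. 0) \<Longrightarrow> \<Upsilon> (msub \<nu> m) \<le> \<Upsilon>' (msub \<nu> m)"
  shows "recRHS c q \<beta> \<Upsilon> \<nu> \<le> recRHS c q \<beta> \<Upsilon>' \<nu>"
  unfolding recRHS_def
  using assms by (intro sum_mono mult_right_mono mult_left_mono prod_nonneg)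
    (auto simp: mbinom_def intro!: mult_nonneg_nonneg prod_nonneg)

lemma recRHS_cong:
  "(\<And>m. mle m \<nu> \<Longrightarrow> m \<noteq> (\<lambda>_. 0) \<Longrightarrow> \<Upsilon> (msub \<nu> m) = \<Upsilon>' (msub \<nu> m))
   \<Longrightarrow> recRHS c q \<beta> \<Upsilon> \<nu> = recRHS c q \<beta> \<Upsilon>' \<nu>"
  unfolding recRHS_def by (intro sum.cong) auto

lemma le_boundRHS_if_subsolution:
  assumes "0 \<le> c" and "\<And>j. 0 \<le> \<beta> j" and "\<Upsilon> (\<lambda>_. 0) \<le> c0"
    and "\<And>\<nu>. finsupp \<nu> \<Longrightarrow> \<nu> \<noteq> (\<lambda>_. 0) \<Longrightarrow> \<Upsilon> \<nu> \<le> recRHS c q \<beta> \<Upsilon> \<nu>"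
    and "finsupp \<nu>"
  shows "\<Upsilon> \<nu> \<le> boundRHS c0 c q \<beta> \<nu>"
  using assms(5)
proof (induction rule: finsupp_msub_induct)
  case (step \<nu>)
  show ?case
  proof (cases "\<nu> = (\<lambda>_. 0)")
    case False
    have "\<Upsilon> \<nu> \<le> recRHS c q \<beta> \<Upsilon> \<nu>" using assms(4) step.hyps False .
    also have "\<dots> \<le> recRHS c q \<beta> (boundRHS c0 c q \<beta>) \<nu>"
      using assms(1,2) step.IH by (intro recRHS_mono)
    also have "\<dots> = boundRHS c0 c q \<beta> \<nu>" using step.hyps False by (rule boundRHS_rec)
    finally show ?thesis .
  qed (simp add: boundRHS_eq_bound_sum assms(3))
qed

lemma eq_boundRHS_if_solution:
  assumes "\<Upsilon> (\<lambda>_. 0) = c0"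
    and "\<And>\<nu>. finsupp \<nu> \<Longrightarrow> \<nu> \<noteq> (\<lambda>_. 0) \<Longrightarrow> \<Upsilon> \<nu> = recRHS c q \<beta> \<Upsilon> \<nu>"
    and "finsupp \<nu>"
  shows "\<Upsilon> \<nu> = boundRHS c0 c q \<beta> \<nu>"
  using assms(3)
proof (induction rule: finsupp_msub_induct)
  case (step \<nu>)
  show ?case
  proof (cases "\<nu> = (\<lambda>_. 0)")
    case False
    have "\<Upsilon> \<nu> = recRHS c q \<beta> \<Upsilon> \<nu>" using assms(2) step.hyps False .
    also have "\<dots> = recRHS c q \<beta> (boundRHS c0 c q \<beta>) \<nu>"
      using step.IH by (rule recRHS_cong)
    also have "\<dots> = boundRHS c0 c q \<beta> \<nu>" using step.hyps False by (rule boundRHS_rec)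
    finally show ?thesis .
  qed (simp add: boundRHS_eq_bound_sum assms(1))
qed

theorem lemmaA1:
  fixes c0 c :: real and q :: enat and \<beta> :: "nat \<Rightarrow> real" and \<Upsilon> :: "mi \<Rightarrow> real"
  assumes "c0 > 0" and "c > 0" and "q \<ge> 1"
    and "\<And>j. \<beta> j \<ge> 0"
    and "\<And>\<nu>. finsupp \<nu> \<Longrightarrow> \<Upsilon> \<nu> \<ge> 0"
    and "\<Upsilon> (\<lambda>_. 0) \<le> c0"
    and "\<And>\<nu>. finsupp \<nu> \<Longrightarrow> \<nu> \<noteq> (\<lambda>_. 0) \<Longrightarrow> \<Upsilon> \<nu> \<le> recRHS c q \<beta> \<Upsilon> \<nu>"
  shows "(\<forall>\<nu>. finsupp \<nu> \<longrightarrow> \<Upsilon> \<nu> \<le> boundRHS c0 c q \<beta> \<nu>)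
    \<and> ((\<Upsilon> (\<lambda>_. 0) = c0 \<and>
         (\<forall>\<nu>. finsupp \<nu> \<and> \<nu> \<noteq> (\<lambda>_. 0) \<longrightarrow> \<Upsilon> \<nu> = recRHS c q \<beta> \<Upsilon> \<nu>))
       \<longrightarrow> (\<forall>\<nu>. finsupp \<nu> \<longrightarrow> \<Upsilon> \<nu> = boundRHS c0 c q \<beta> \<nu>))"
proof (intro conjI allI impI)
  fix \<nu> assume "finsupp \<nu>"
  with assms(2,4,6,7) show "\<Upsilon> \<nu> \<le> boundRHS c0 c q \<beta> \<nu>"
    by (intro le_boundRHS_if_subsolution) auto
next
  fix \<nu> assume "finsupp \<nu>"
    and "\<Upsilon> (\<lambda>_. 0) = c0 \<and> (\<forall>\<nu>. finsupp \<nu> \<and> \<nu> \<noteq> (\<lambda>_. 0) \<longrightarrow> \<Upsilon> \<nu> = recRHS c q \<beta> \<Upsilon> \<nu>)"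
  then show "\<Upsilon> \<nu> = boundRHS c0 c q \<beta> \<nu>"
    by (intro eq_boundRHS_if_solution) auto
qed

end
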